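(* Let $\mathfrak{g}$ be a finite-dimensional Lie algebra over a field $K$ of characteristic zero, and let $(A,\cdot)$ be a CPA-structure on $\mathfrak{g}$. Then there exists an ideal $I_\infty$ such that (1) $I_\infty^{[k]}\subseteq \mathrm{Ann}_A\subseteq I_\infty$ for all $k$ large enough, and (2) the induced CPA-structure on $\mathfrak{g}/I_\infty$ is nondegenerate.
   Context: A CPA-structure on a Lie algebra $\mathfrak{g}$ is a bilinear product $x\cdot y$ on the underlying space $A$ of $\mathfrak{g}$ satisfying, for all $x,y,z$: $x\cdot y=y\cdot x$; $[x,y]\cdot z=x\cdot(y\cdot z)-y\cdot(x\cdot z)$; $x\cdot[y,z]=[x\cdot y,z]+[y,x\cdot z]$. Let $L(x)(y)=x\cdot y$. The annihilator is $\mathrm{Ann}_A=\ker L=\{x\mid L(x)=0\}$; the structure is nondegenerate if $\mathrm{Ann}_A=0$. An ideal is a subspace $I$ that is both a Lie ideal ($[\mathfrak{g},I]\subseteq I$) and an algebra ideal ($A\cdot I\subseteq I$). For an ideal $I$, $I^{[n]}=[I,[I,[\cdots,[I,I]\cdots]]]$ with $n$ factors $I$. *)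

theory Defs
  imports Complex_Main
begin

definition fin_dim_vs :: "('k::field \<Rightarrow> 'v::ab_group_add \<Rightarrow> 'v) \<Rightarrow> bool" where
  "fin_dim_vs scale \<longleftrightarrow> vector_space scale \<and> (\<exists>B. finite B \<and> module.span scale B = UNIV)"

definition bilinear_map :: "('k::field \<Rightarrow> 'v::ab_group_add \<Rightarrow> 'v) \<Rightarrow> ('v \<Rightarrow> 'v \<Rightarrow> 'v) \<Rightarrow> bool" where
  "bilinear_map scale f \<longleftrightarrow>
     (\<forall>x. Vector_Spaces.linear scale scale (f x)) \<and> (\<forall>y. Vector_Spaces.linear scale scale (\<lambda>x. f x y))"

definition lie_algebra :: "('k::field \<Rightarrow> 'v::ab_group_add \<Rightarrow> 'v) \<Rightarrow> ('v \<Rightarrow> 'v \<Rightarrow> 'v) \<Rightarrow> bool" where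
  "lie_algebra scale br \<longleftrightarrow> bilinear_map scale br \<and> (\<forall>x. br x x = 0) \<and>
     (\<forall>x y z. br x (br y z) + br y (br z x) + br z (br x y) = 0)"

definition CPA_structure :: "('k::field \<Rightarrow> 'v::ab_group_add \<Rightarrow> 'v) \<Rightarrow> ('v \<Rightarrow> 'v \<Rightarrow> 'v) \<Rightarrow> ('v \<Rightarrow> 'v \<Rightarrow> 'v) \<Rightarrow> bool" where
  "CPA_structure scale br p \<longleftrightarrow> bilinear_map scale p \<and>
     (\<forall>x y. p x y = p y x) \<and>
     (\<forall>x y z. p (br x y) z = p x (p y z) - p y (p x z)) \<and>
     (\<forall>x y z. p x (br y z) = br (p x y) z + br y (p x z))"

definition annihilator :: "('v \<Rightarrow> 'v \<Rightarrow> 'v::zero) \<Rightarrow> 'v set" where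
  "annihilator p = {x. \<forall>y. p x y = 0}"

definition CPA_ideal :: "('k::field \<Rightarrow> 'v::ab_group_add \<Rightarrow> 'v) \<Rightarrow> ('v \<Rightarrow> 'v \<Rightarrow> 'v) \<Rightarrow> ('v \<Rightarrow> 'v \<Rightarrow> 'v) \<Rightarrow> 'v set \<Rightarrow> bool" where
  "CPA_ideal scale br p I \<longleftrightarrow> module.subspace scale I \<and>
     (\<forall>x y. y \<in> I \<longrightarrow> br x y \<in> I) \<and> (\<forall>x y. y \<in> I \<longrightarrow> p x y \<in> I)"

definition bracket_sub :: "('k::field \<Rightarrow> 'v::ab_group_add \<Rightarrow> 'v) \<Rightarrow> ('v \<Rightarrow> 'v \<Rightarrow> 'v) \<Rightarrow> 'v set \<Rightarrow> 'v set \<Rightarrow> 'v set" where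
  "bracket_sub scale br U W = module.span scale {br u w | u w. u \<in> U \<and> w \<in> W}"

text \<open>I^[n] = [I,[I,...,[I,I]...]] with n factors (n \<ge> 1); I^[0] := UNIV by convention.\<close>
fun lie_power :: "('k::field \<Rightarrow> 'v::ab_group_add \<Rightarrow> 'v) \<Rightarrow> ('v \<Rightarrow> 'v \<Rightarrow> 'v) \<Rightarrow> 'v set \<Rightarrow> nat \<Rightarrow> 'v set" where
  "lie_power scale br I 0 = UNIV"
| "lie_power scale br I (Suc 0) = I"
| "lie_power scale br I (Suc (Suc n)) = bracket_sub scale br I (lie_power scale br I (Suc n))"

text \<open>For an ideal I, the induced CPA-structure on g/I is nondegenerate: its annihilator
  {x + I | x \<cdot> y \<in> I for all y} is zero, i.e. x \<cdot> A \<subseteq> I implies x \<in> I.\<close>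
definition quotient_nondegenerate :: "('v \<Rightarrow> 'v \<Rightarrow> 'v) \<Rightarrow> 'v set \<Rightarrow> bool" where
  "quotient_nondegenerate p I \<longleftrightarrow> (\<forall>x. (\<forall>y. p x y \<in> I) \<longrightarrow> x \<in> I)"

end

theory Submission
  imports Defs
begin

text \<open>Let \<open>J\<^sub>0 = 0\<close> and \<open>J\<^sub>m\<^sub>+\<^sub>1 = {x. x \<cdot> A \<subseteq> J\<^sub>m}\<close>. Each \<open>J\<^sub>m\<close> is an ideal, and
  the chain \<open>J\<^sub>0 \<subseteq> J\<^sub>1 = Ann\<^sub>A \<subseteq> J\<^sub>2 \<subseteq> \<dots>\<close> stabilises at some \<open>J\<^sub>N\<close> by finite dimension;
  \<open>I\<^sub>\<infinity> = J\<^sub>N\<close>. Stability \<open>J\<^sub>N\<^sub>+\<^sub>1 = J\<^sub>N\<close> is exactly nondegeneracy of \<open>A/J\<^sub>N\<close>.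
  Left multiplication by an element of \<open>J\<^sub>N\<close> moves the filtration
  \<open>A \<supseteq> J\<^sub>N\<^sub>-\<^sub>1 \<supseteq> \<dots> \<supseteq> J\<^sub>0 = 0\<close> down one step, and since \<open>L([x,y]) = [L(x),L(y)]\<close>
  an element of \<open>I\<^sub>\<infinity>\<^bsup>[k]\<^esup>\<close> moves it down \<open>k\<close> steps; so \<open>I\<^sub>\<infinity>\<^bsup>[k]\<^esup> \<subseteq> Ann\<^sub>A\<close> for \<open>k \<ge> N\<close>.\<close>

fun ann_series :: "('v::ab_group_add \<Rightarrow> 'v \<Rightarrow> 'v) \<Rightarrow> nat \<Rightarrow> 'v set" where
  "ann_series p 0 = {0}"
| "ann_series p (Suc m) = {x. \<forall>y. p x y \<in> ann_series p m}"

lemma annihilator_eq_ann_series_1: "annihilator p = ann_series p 1"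
  by (auto simp: annihilator_def)

lemma fin_dim_vs_imp_finite_dimensional:
  assumes "fin_dim_vs scale"
  shows "\<exists>B. finite_dimensional_vector_space scale B"
proof -
  from assms have vs: "vector_space scale"
    and "\<exists>B. finite B \<and> module.span scale B = UNIV"
    by (auto simp: fin_dim_vs_def)
  then obtain B where "finite B" "module.span scale B = UNIV" by blast
  moreover obtain B' where "module.independent scale B'" "UNIV \<subseteq> module.span scale B'"
    using vector_space.basis_exists[OF vs, of UNIV] by blast
  ultimately have "finite_dimensional_vector_space scale B'"
    using vector_space.independent_span_bound[OF vs] vs
    by (unfold_locales; auto simp: vector_space_def)
  then show ?thesis ..
qed

context finite_dimensional_vector_space
begin

lemma subspace_chain_stabilizes:
  assumes "\<And>n. subspace (S n)" and "\<And>n. S n \<subseteq> S (Suc n)"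
  shows "\<exists>N. S (Suc N) = S N"
proof (rule ccontr)
  assume "\<nexists>N. S (Suc N) = S N"
  with assms(2) have strict: "S n \<subset> S (Suc n)" for n by blast
  have "n \<le> dim (S n)" for n
  proof (induction n)
    case (Suc n)
    have "dim (S n) < dim (S (Suc n))"
      using dim_psubset[of "S n" "S (Suc n)"] strict[of n] assms(1) span_eq_iff by metis
    with Suc show ?case by simp
  qed simp
  then have "Suc dimension \<le> dimension"
    using dim_subset_UNIV[of "S (Suc dimension)"] le_trans by blast
  then show False by simp
qed

end

locale cpa_algebra = vector_space scale
  for scale :: "'k::field \<Rightarrow> 'v::ab_group_add \<Rightarrow> 'v" +
  fixes br p :: "'v \<Rightarrow> 'v \<Rightarrow> 'v"
  assumes lie_algebra: "lie_algebra scale br"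
    and cpa: "CPA_structure scale br p"
begin

lemma p_linear_left: "Vector_Spaces.linear scale scale (\<lambda>x. p x y)"
  and p_linear_right: "Vector_Spaces.linear scale scale (p x)"
  and br_linear_left: "Vector_Spaces.linear scale scale (\<lambda>x. br x y)"
  and br_linear_right: "Vector_Spaces.linear scale scale (br x)"
  using cpa lie_algebra by (simp_all add: CPA_structure_def lie_algebra_def bilinear_map_def)

lemmas p_add_left = module_hom.add[OF module_hom_linearI[OF p_linear_left]]
  and p_scale_left = module_hom.scale[OF module_hom_linearI[OF p_linear_left]]
  and p_zero_left = module_hom.zero[OF module_hom_linearI[OF p_linear_left]]
  and p_zero_right = module_hom.zero[OF module_hom_linearI[OF p_linear_right]]
  and br_add_left = module_hom.add[OF module_hom_linearI[OF br_linear_left]]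
  and br_add_right = module_hom.add[OF module_hom_linearI[OF br_linear_right]]
  and br_zero_right = module_hom.zero[OF module_hom_linearI[OF br_linear_right]]

lemma p_commute: "p x y = p y x"
  and p_bracket_left: "p (br x y) z = p x (p y z) - p y (p x z)"
  and p_derivation: "p x (br y z) = br (p x y) z + br y (p x z)"
  using cpa unfolding CPA_structure_def by blast+

lemma br_self: "br x x = 0"
  using lie_algebra by (simp add: lie_algebra_def)

lemma br_antisym: "br x y = - br y x"
proof -
  have "br x x + br y x + (br x y + br y y) = 0"
    using br_self[of "x + y"] unfolding br_add_left br_add_right .
  then show ?thesis by (simp add: br_self eq_neg_iff_add_eq_0 add.commute)
qed

lemma p_ann_series_pred: "z \<in> ann_series p m \<Longrightarrow> p x z \<in> ann_series p (m - 1)"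
  by (cases m) (auto simp: p_zero_left p_zero_right p_commute)

lemma subspace_ann_series: "subspace (ann_series p m)"
proof (induction m)
  case 0
  show ?case by (simp add: subspace_def)
next
  case (Suc m)
  then show ?case
    unfolding subspace_def
    using subspace_0 subspace_add subspace_scale
    by (auto simp: p_zero_left p_add_left p_scale_left)
qed

lemma CPA_ideal_ann_series: "CPA_ideal scale br p (ann_series p m)"
proof (induction m)
  case 0
  show ?case by (simp add: CPA_ideal_def subspace_def br_zero_right p_zero_right)
next
  case (Suc m)
  let ?J = "ann_series p m"
  from Suc have lie_ideal: "br x y \<in> ?J" and alg_ideal: "p x y \<in> ?J" if "y \<in> ?J" for x y
    using that by (auto simp: CPA_ideal_def)
  have J: "subspace ?J" by (rule subspace_ann_series)
  have "br x y \<in> ann_series p (Suc m)" if y: "y \<in> ann_series p (Suc m)" for x y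
  proof -
    have "p x (p y z) - p y (p x z) \<in> ?J" for z
      using y by (auto intro: subspace_diff[OF J alg_ideal])
    then show ?thesis by (simp add: p_bracket_left)
  qed
  moreover have "p x y \<in> ann_series p (Suc m)" if y: "y \<in> ann_series p (Suc m)" for x y
  proof -
    have yz: "p y z \<in> ?J" "p y x \<in> ?J" for z
      using y by auto
    \<comment> \<open>expand \<open>[z,x] \<cdot> y = y \<cdot> [z,x]\<close> by the second and by the third axiom\<close>
    have "p z (p x y) = p x (p z y) + (br (p y z) x + br z (p y x))" for z
      using p_bracket_left[of z x y] p_derivation[of y z x] p_commute[of y "br z x"]
      by (simp add: algebra_simps)
    moreover have "br (p y z) x \<in> ?J" for z
      using subspace_neg[OF J lie_ideal[OF yz(1)]] br_antisym by metis
    ultimately have "p z (p x y) \<in> ?J" for z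
      using yz alg_ideal lie_ideal p_commute[of z y]
      by (metis subspace_add[OF J])
    then show ?thesis by (simp add: p_commute[of "p x y"])
  qed
  ultimately show ?case
    using subspace_ann_series[of "Suc m"] unfolding CPA_ideal_def by blast
qed

lemma ann_series_subset_Suc: "ann_series p m \<subseteq> ann_series p (Suc m)"
  by (induction m) (auto simp: p_zero_left)

lemma ann_series_mono: "m \<le> n \<Longrightarrow> ann_series p m \<subseteq> ann_series p n"
  by (rule lift_Suc_mono_le[of "ann_series p", OF ann_series_subset_Suc])

lemma quotient_nondegenerate_ann_series:
  assumes "ann_series p (Suc N) = ann_series p N"
  shows "quotient_nondegenerate p (ann_series p N)"
  using assms by (auto simp: quotient_nondegenerate_def)

lemma lie_power_shifts_filtration:
  assumes F: "\<And>j. subspace (F j)"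
    and shift: "\<And>x j z. x \<in> I \<Longrightarrow> z \<in> F j \<Longrightarrow> p x z \<in> F (Suc j)"
  shows "v \<in> lie_power scale br I (Suc n) \<Longrightarrow> z \<in> F j \<Longrightarrow> p v z \<in> F (j + Suc n)"
proof (induction n arbitrary: v j z)
  case 0
  then show ?case using shift by simp
next
  case (Suc n)
  define S where "S = {v. \<forall>j z. z \<in> F j \<longrightarrow> p v z \<in> F (j + Suc (Suc n))}"
  have "subspace S"
    unfolding S_def subspace_def
    using subspace_0[OF F] subspace_add[OF F] subspace_scale[OF F]
    by (auto simp: p_zero_left p_add_left p_scale_left)
  moreover have "br u w \<in> S" if "u \<in> I" "w \<in> lie_power scale br I (Suc n)" for u w
  proof -
    have "p u (p w z) - p w (p u z) \<in> F (j + Suc (Suc n))" if "z \<in> F j" for j z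
      using shift[OF \<open>u \<in> I\<close> Suc.IH[OF \<open>w \<in> _\<close> \<open>z \<in> F j\<close>]]
        Suc.IH[OF \<open>w \<in> _\<close> shift[OF \<open>u \<in> I\<close> \<open>z \<in> F j\<close>]]
      by (intro subspace_diff[OF F]) simp_all
    then show ?thesis by (simp add: S_def p_bracket_left)
  qed
  ultimately have "lie_power scale br I (Suc (Suc n)) \<subseteq> S"
    unfolding lie_power.simps bracket_sub_def by (intro span_minimal) blast+
  with Suc.prems show ?case by (auto simp: S_def)
qed

lemma lie_power_ann_series_subset_annihilator:
  assumes "0 < k" and "N \<le> k"
  shows "lie_power scale br (ann_series p N) k \<subseteq> annihilator p"
proof
  fix v assume v: "v \<in> lie_power scale br (ann_series p N) k"
  define F where "F j = (if j = 0 then UNIV else ann_series p (N - j))" for j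
  have F: "subspace (F j)" for j
    by (simp add: F_def subspace_ann_series subspace_UNIV)
  have shift: "p x z \<in> F (Suc j)" if x: "x \<in> ann_series p N" and z: "z \<in> F j" for x j z
  proof (cases "j = 0")
    case True
    then show ?thesis using p_ann_series_pred[OF x, of z] p_commute[of x z] by (simp add: F_def)
  next
    case False
    then show ?thesis using p_ann_series_pred[of z "N - j" x] z by (simp add: F_def)
  qed
  obtain n where k: "k = Suc n" using \<open>0 < k\<close> gr0_implies_Suc by blast
  have "p v z \<in> F (0 + Suc n)" for z
    using lie_power_shifts_filtration[of F "ann_series p N", OF F shift, of v n z 0] v k
    by (simp add: F_def)
  with assms k have "p v z = 0" for z by (simp add: F_def)
  then show "v \<in> annihilator p" by (simp add: annihilator_def)
qed

end

theorem proposition2p6: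
  fixes scale :: "'k::field_char_0 \<Rightarrow> 'v::ab_group_add \<Rightarrow> 'v"
    and br p :: "'v \<Rightarrow> 'v \<Rightarrow> 'v"
  assumes "fin_dim_vs scale"
    and "lie_algebra scale br"
    and "CPA_structure scale br p"
  shows "\<exists>I. CPA_ideal scale br p I \<and>
           (\<exists>N. \<forall>k\<ge>N. lie_power scale br I k \<subseteq> annihilator p) \<and>
           annihilator p \<subseteq> I \<and>
           quotient_nondegenerate p I"
proof -
  obtain B where "finite_dimensional_vector_space scale B"
    using fin_dim_vs_imp_finite_dimensional[OF assms(1)] ..
  then interpret finite_dimensional_vector_space scale B .
  interpret cpa_algebra scale br p
    by unfold_locales (fact assms(2,3))+
  obtain N where stable: "ann_series p (Suc N) = ann_series p N"
    using subspace_chain_stabilizes[of "ann_series p", OF subspace_ann_series ann_series_subset_Suc]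
    by blast
  show ?thesis
  proof (intro exI conjI)
    show "CPA_ideal scale br p (ann_series p N)"
      by (rule CPA_ideal_ann_series)
    show "\<forall>k\<ge>Suc N. lie_power scale br (ann_series p N) k \<subseteq> annihilator p"
      using lie_power_ann_series_subset_annihilator by simp
    show "annihilator p \<subseteq> ann_series p N"
      using ann_series_mono[of 1 "Suc N"] unfolding annihilator_eq_ann_series_1 stable by simp
    show "quotient_nondegenerate p (ann_series p N)"
      using stable by (rule quotient_nondegenerate_ann_series)
  qed
qed

end
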